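(* Let $G$ and $H$ be finite simple graphs, each with at least two vertices. Then the modular product $G\diamond H$ has no two distinct vertices $x,y$ with $N_{G\diamond H}(x)=N_{G\diamond H}(y)$.
   Context: The modular product $G\diamond H$ has vertex set $V(G)\times V(H)$; distinct vertices $(g,h)$ and $(g',h')$ are adjacent iff ($g=g'$ and $hh'\in E(H)$), or ($gg'\in E(G)$ and $h=h'$), or ($gg'\in E(G)$ and $hh'\in E(H)$), or ($g\neq g'$, $h\neq h'$, $gg'\notin E(G)$ and $hh'\notin E(H)$). $N_X(v)$ denotes the open neighborhood of $v$ in a graph $X$. *)

theory Defs
  imports Main
begin

definition simple_graph :: "'a set \<Rightarrow> ('a \<Rightarrow> 'a \<Rightarrow> bool) \<Rightarrow> bool" where
  "simple_graph V E \<longleftrightarrow> finite V \<and> (\<forall>x y. E x y \<longrightarrow> x \<in> V \<and> y \<in> V)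
     \<and> (\<forall>x y. E x y \<longrightarrow> E y x) \<and> (\<forall>x. \<not> E x x)"

definition modprod_edge ::
  "('a \<Rightarrow> 'a \<Rightarrow> bool) \<Rightarrow> ('b \<Rightarrow> 'b \<Rightarrow> bool) \<Rightarrow> 'a \<times> 'b \<Rightarrow> 'a \<times> 'b \<Rightarrow> bool" where
  "modprod_edge EG EH x y \<longleftrightarrow> x \<noteq> y \<and>
     (let g = fst x; h = snd x; g' = fst y; h' = snd y in
       (g = g' \<and> EH h h') \<or> (EG g g' \<and> h = h') \<or> (EG g g' \<and> EH h h') \<or>
       (g \<noteq> g' \<and> h \<noteq> h' \<and> \<not> EG g g' \<and> \<not> EH h h'))"

definition nbhd :: "'a set \<Rightarrow> ('a \<Rightarrow> 'a \<Rightarrow> bool) \<Rightarrow> 'a \<Rightarrow> 'a set" where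
  "nbhd V E v = {u \<in> V. E v u}"

end

theory Submission
  imports Defs
begin

text \<open>Suppose distinct vertices \<open>x = (g, h)\<close> and \<open>y = (g', h')\<close> had the same neighbourhood.
  Then they are non-adjacent, and some third vertex sees exactly one of them: if \<open>g = g'\<close>
  (so \<open>h h'\<close> is a non-edge), take \<open>(g\<^sub>2, h)\<close> for any \<open>g\<^sub>2 \<noteq> g\<close>, which is adjacent to \<open>x\<close> iff
  \<open>g g\<^sub>2\<close> is an edge and to \<open>y\<close> iff it is not; symmetrically if \<open>h = h'\<close>; and if both
  coordinates differ, non-adjacency means exactly one of \<open>g g'\<close>, \<open>h h'\<close> is an edge, and
  \<open>(g, h')\<close> is adjacent to \<open>x\<close> iff \<open>h h'\<close> is and to \<open>y\<close> iff \<open>g g'\<close> is.\<close>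

lemma card_ge_2_obtain_other:
  assumes "card V \<ge> 2" and "v \<in> V"
  obtains w where "w \<in> V" and "w \<noteq> v"
  using assms by (cases "V = {v}") auto

lemma nbhd_eq_imp_adj_iff:
  assumes "nbhd V E x = nbhd V E y" and "z \<in> V"
  shows "E x z \<longleftrightarrow> E y z"
  using assms unfolding nbhd_def by blast

lemma nbhd_eq_imp_not_adj:
  assumes "nbhd V E x = nbhd V E y" and "x \<in> V" and "\<And>v. \<not> E v v"
  shows "\<not> E y x"
  using nbhd_eq_imp_adj_iff[OF assms(1,2)] assms(3) by blast

lemma modprod_edge_same_fst:
  assumes "\<not> EG g g" and "\<not> EH h h"
  shows "modprod_edge EG EH (g, h) (g, h') \<longleftrightarrow> EH h h'"
  using assms by (auto simp: modprod_edge_def)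

lemma modprod_edge_same_snd:
  assumes "\<not> EG g g" and "\<not> EH h h"
  shows "modprod_edge EG EH (g, h) (g', h) \<longleftrightarrow> EG g g'"
  using assms by (auto simp: modprod_edge_def)

lemma modprod_edge_distinct:
  assumes "g \<noteq> g'" and "h \<noteq> h'"
  shows "modprod_edge EG EH (g, h) (g', h') \<longleftrightarrow> (EG g g' \<longleftrightarrow> EH h h')"
  using assms by (auto simp: modprod_edge_def)

lemma modprod_non_adjacent_distinguished:
  assumes G: "simple_graph VG EG" and H: "simple_graph VH EH"
    and "card VG \<ge> 2" and "card VH \<ge> 2"
    and x: "x \<in> VG \<times> VH" and y: "y \<in> VG \<times> VH" and "x \<noteq> y"
    and non_adj: "\<not> modprod_edge EG EH y x"
  obtains z where "z \<in> VG \<times> VH" and "modprod_edge EG EH x z \<noteq> modprod_edge EG EH y z"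
proof -
  obtain g h g' h' where xy: "x = (g, h)" "y = (g', h')" by fastforce
  have symG: "EG a b \<longleftrightarrow> EG b a" and irrG: "\<not> EG a a" for a b
    using G unfolding simple_graph_def by blast+
  have symH: "EH a b \<longleftrightarrow> EH b a" and irrH: "\<not> EH a a" for a b
    using H unfolding simple_graph_def by blast+
  consider (same_fst) "g = g'" "h \<noteq> h'" | (same_snd) "g \<noteq> g'" "h = h'"
    | (distinct) "g \<noteq> g'" "h \<noteq> h'"
    using \<open>x \<noteq> y\<close> xy by blast
  then show thesis
  proof cases
    case same_fst
    obtain g2 where "g2 \<in> VG" "g2 \<noteq> g"
      using card_ge_2_obtain_other[OF \<open>card VG \<ge> 2\<close>] x xy by blast
    moreover have "\<not> EH h h'"
      using non_adj same_fst xy by (simp add: modprod_edge_same_fst irrG irrH symH)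
    ultimately show thesis
      using that[of "(g2, h)"] x same_fst xy
      by (auto simp: modprod_edge_same_snd modprod_edge_distinct irrG irrH symH)
  next
    case same_snd
    obtain h2 where "h2 \<in> VH" "h2 \<noteq> h"
      using card_ge_2_obtain_other[OF \<open>card VH \<ge> 2\<close>] x xy by blast
    moreover have "\<not> EG g g'"
      using non_adj same_snd xy by (simp add: modprod_edge_same_snd irrG irrH symG)
    ultimately show thesis
      using that[of "(g, h2)"] x same_snd xy
      by (auto simp: modprod_edge_same_fst modprod_edge_distinct irrG irrH symG)
  next
    case distinct
    have "EG g g' \<noteq> EH h h'"
      using non_adj distinct xy by (auto simp: modprod_edge_distinct symG symH)
    then show thesis
      using that[of "(g, h')"] x y distinct xy
      by (auto simp: modprod_edge_same_fst modprod_edge_same_snd irrG irrH symG)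
  qed
qed

theorem mainTheorem1:
  fixes VG :: "'a set" and EG :: "'a \<Rightarrow> 'a \<Rightarrow> bool"
    and VH :: "'b set" and EH :: "'b \<Rightarrow> 'b \<Rightarrow> bool"
  assumes "simple_graph VG EG" and "simple_graph VH EH"
    and "card VG \<ge> 2" and "card VH \<ge> 2"
    and "x \<in> VG \<times> VH" and "y \<in> VG \<times> VH" and "x \<noteq> y"
  shows "nbhd (VG \<times> VH) (modprod_edge EG EH) x \<noteq> nbhd (VG \<times> VH) (modprod_edge EG EH) y"
proof
  assume twins: "nbhd (VG \<times> VH) (modprod_edge EG EH) x = nbhd (VG \<times> VH) (modprod_edge EG EH) y"
  have "\<not> modprod_edge EG EH y x"
    using nbhd_eq_imp_not_adj[OF twins \<open>x \<in> VG \<times> VH\<close>] by (simp add: modprod_edge_def)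
  then obtain z where "z \<in> VG \<times> VH" "modprod_edge EG EH x z \<noteq> modprod_edge EG EH y z"
    using modprod_non_adjacent_distinguished assms by metis
  then show False
    using nbhd_eq_imp_adj_iff[OF twins] by blast
qed

end
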